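(* Let $n\ge3$ and $3\le j\le n$ be integers and let $\alpha\in I_{j,n}$. Then the coefficient $c^{(n)}_\alpha$ is non-negative if $j$ is even and non-positive if $j$ is odd.
   Context: Let $T_1,T_2,\dots$ be indeterminates, $T_\alpha=T_{\alpha_1}\cdots T_{\alpha_d}$. Define linear operators $L,H$ on monomials (constants sent to $0$): $L(T_{\alpha_1}\cdots T_{\alpha_r})=\sum_{1\le i<j\le r}T_{\alpha_1}\cdots T_{\alpha_i+1}\cdots T_{\alpha_j+1}\cdots T_{\alpha_r}$, $H(T_{\alpha_1}\cdots T_{\alpha_r})=-\frac12\sum_{k=1}^{r}\sum_{l=1}^{\alpha_k-1}\binom{\alpha_k}{l}T_{1+l}T_{1+\alpha_k-l}\prod_{i\ne k}T_{\alpha_i}$. For $n\ge2$ let $A_n=-\sum_{k=1}^{n-1}\binom{n}{k}T_{1+k}T_{1+n-k}T_n$; set $R_2=0$, $R_{n+1}=A_n+L(R_n)+H(R_n)$. $I_{j,n}$ is the set of non-increasing $j$-tuples of integers in $\{2,\dots,n-1\}$ with sum $2n$, and $c^{(n)}_\alpha$ is the coefficient of the monomial $T_\alpha$ in $R_n$. *)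

theory Defs
  imports Complex_Main "HOL-Library.Multiset"
begin

text \<open>Polynomials in the indeterminates T_1, T_2, ... with rational coefficients are
represented as formal sums: lists of (coefficient, monomial) pairs, where a monomial
T_{a_1} ... T_{a_r} is represented by the list [a_1, ..., a_r]. Monomials are commutative,
so the coefficient of T_alpha is the sum of coefficients of all terms whose monomial
has the same multiset of indices as alpha.\<close>

type_synonym tpoly = "(rat \<times> nat list) list"

definition L_mono :: "nat list \<Rightarrow> nat list list" where
  "L_mono xs = concat (map (\<lambda>i. map (\<lambda>j. xs[i := xs ! i + 1, j := xs ! j + 1])
                                   [Suc i..<length xs]) [0..<length xs])"

definition L_op :: "tpoly \<Rightarrow> tpoly" where
  "L_op p = concat (map (\<lambda>(c, xs). map (\<lambda>ys. (c, ys)) (L_mono xs)) p)"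

definition H_mono :: "nat list \<Rightarrow> (rat \<times> nat list) list" where
  "H_mono xs = concat (map (\<lambda>k. map (\<lambda>l. (- (1/2) * of_nat ((xs ! k) choose l),
                       (1 + l) # (1 + xs ! k - l) # (take k xs @ drop (Suc k) xs)))
                     [1..<xs ! k]) [0..<length xs])"

definition H_op :: "tpoly \<Rightarrow> tpoly" where
  "H_op p = concat (map (\<lambda>(c, xs). map (\<lambda>(d, ys). (c * d, ys)) (H_mono xs)) p)"

definition A_poly :: "nat \<Rightarrow> tpoly" where
  "A_poly n = map (\<lambda>k. (- of_nat (n choose k), [1 + k, 1 + n - k, n])) [1..<n]"

text \<open>R 2 = 0 and R (n+1) = A n + L (R n) + H (R n) for n >= 2; R 0, R 1 are unused (set to 0).\<close>
primrec R_poly :: "nat \<Rightarrow> tpoly" where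
  "R_poly 0 = []"
| "R_poly (Suc n) = (if n < 2 then [] else A_poly n @ L_op (R_poly n) @ H_op (R_poly n))"

definition coeffR :: "nat \<Rightarrow> nat list \<Rightarrow> rat" where
  "coeffR n \<alpha> = sum_list (map fst (filter (\<lambda>(c, xs). mset xs = mset \<alpha>) (R_poly n)))"

definition I_set :: "nat \<Rightarrow> nat \<Rightarrow> nat list set" where
  "I_set j n = {\<alpha>. length \<alpha> = j \<and> sorted_wrt (\<ge>) \<alpha> \<and> set \<alpha> \<subseteq> {2..n-1} \<and> sum_list \<alpha> = 2 * n}"

end

theory Submission
  imports Defs
begin

text \<open>Every term c T_xs of R_n has sign (-1)^(deg T_xs): the terms of A_n are cubic with
negative coefficients, L keeps the degree and the coefficient, and H raises the degree
by one while multiplying the coefficient by a non-positive factor. The coefficient of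
T_alpha is a sum of such terms, all of degree length alpha.\<close>

definition degree_signed :: "rat \<times> nat list \<Rightarrow> bool" where
  "degree_signed t \<longleftrightarrow> 0 \<le> (-1) ^ length (snd t) * fst t"

lemma length_L_mono: "ys \<in> set (L_mono xs) \<Longrightarrow> length ys = length xs"
  unfolding L_mono_def by auto

lemma H_mono_raises_degree_nonpos:
  "(d, ys) \<in> set (H_mono xs) \<Longrightarrow> length ys = Suc (length xs) \<and> d \<le> 0"
  unfolding H_mono_def by auto

lemma degree_signed_A_poly: "t \<in> set (A_poly n) \<Longrightarrow> degree_signed t"
  unfolding A_poly_def degree_signed_def by auto

lemma degree_signed_L_op:
  assumes "\<forall>t\<in>set q. degree_signed t" and "t \<in> set (L_op q)"
  shows "degree_signed t"
  using assms length_L_mono unfolding L_op_def degree_signed_def by fastforce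

lemma degree_signed_H_op:
  assumes "\<forall>t\<in>set q. degree_signed t" and "t \<in> set (H_op q)"
  shows "degree_signed t"
proof -
  obtain c xs d ys where cxs: "(c, xs) \<in> set q" and dys: "(d, ys) \<in> set (H_mono xs)"
    and t: "t = (c * d, ys)"
    using assms(2) unfolding H_op_def by auto
  have "0 \<le> (-1) ^ length xs * c"
    using assms(1) cxs by (auto simp: degree_signed_def)
  then have "0 \<le> ((-1) ^ length xs * c) * (- d)"
    using H_mono_raises_degree_nonpos[OF dys] by (simp add: mult_nonneg_nonpos)
  moreover have "(-1) ^ length ys * (c * d) = ((-1) ^ length xs * c) * (- d)"
    using H_mono_raises_degree_nonpos[OF dys] by simp
  ultimately show ?thesis
    unfolding t degree_signed_def by simp
qed

lemma degree_signed_R_poly: "\<forall>t\<in>set (R_poly n). degree_signed t"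
proof (induction n)
  case 0
  then show ?case by simp
next
  case (Suc n)
  then show ?case
    using degree_signed_A_poly degree_signed_L_op[OF Suc] degree_signed_H_op[OF Suc]
    by auto
qed

lemma coeffR_signed: "0 \<le> (-1) ^ length \<alpha> * coeffR n \<alpha>"
proof -
  let ?terms = "filter (\<lambda>(c, xs). mset xs = mset \<alpha>) (R_poly n)"
  have term_signed: "0 \<le> (-1) ^ length \<alpha> * fst t" if "t \<in> set ?terms" for t
  proof -
    from that have "length (snd t) = length \<alpha>"
      by (metis (mono_tags, lifting) case_prod_beta mem_Collect_eq set_filter size_mset)
    moreover have "t \<in> set (R_poly n)"
      using that by simp
    ultimately show ?thesis
      using degree_signed_R_poly unfolding degree_signed_def by metis
  qed
  have "(-1) ^ length \<alpha> * coeffR n \<alpha> = sum_list (map (\<lambda>t. (-1) ^ length \<alpha> * fst t) ?terms)"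
    unfolding coeffR_def by (simp add: sum_list_const_mult)
  also have "0 \<le> \<dots>"
    by (rule sum_list_nonneg) (use term_signed in auto)
  finally show ?thesis .
qed

theorem mainTheorem10:
  fixes n j :: nat and \<alpha> :: "nat list"
  assumes "n \<ge> 3" and "3 \<le> j" and "j \<le> n" and "\<alpha> \<in> I_set j n"
  shows "(even j \<longrightarrow> coeffR n \<alpha> \<ge> 0) \<and> (odd j \<longrightarrow> coeffR n \<alpha> \<le> 0)"
proof -
  have "length \<alpha> = j"
    using assms(4) by (simp add: I_set_def)
  then have "0 \<le> (-1) ^ j * coeffR n \<alpha>"
    using coeffR_signed by blast
  then show ?thesis
    by auto
qed

end
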